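(* Let $(\mathcal P_1,\cdot_1,[-,-]_1)$ and $(\mathcal P_2,\cdot_2,[-,-]_2)$ be Poisson algebras, and let $\mathcal P=\mathcal P_1\otimes\mathcal P_2$ be the Poisson algebra with componentwise product $\cdot$ and Lie bracket $$[x_1\otimes y_1,x_2\otimes y_2]_\otimes=[x_1,x_2]_1\otimes(y_1\cdot_2y_2)+(x_1\cdot_1x_2)\otimes[y_1,y_2]_2 .$$ Endow $\mathcal P$ with the $n$-ary bracket $$[x_1,x_2,\dots,x_n]:=[x_1,[x_2,\dots,[x_{n-1},x_n]_\otimes\dots]_\otimes]_\otimes,\qquad x_i\in\mathcal P.$$ Let $\mathcal I$ be the ideal of the Poisson algebra $(\mathcal P,\cdot,[-,-]_\otimes)$ generated by all elements $$[x_1,\dots,x_i,\dots,x_j,\dots,x_n]+[x_1,\dots,x_j,\dots,x_i,\dots,x_n],\qquad 1\le i<j\le n,\ x_k\in\mathcal P.$$ Then the quotient $\mathcal P/\mathcal I$, with the induced product and the induced $n$-ary bracket $[\bar x_1,\dots,\bar x_n]=[x_1,\dots,x_n]+\mathcal I$, is a Poisson $n$-Lie algebra.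
   Context: A Poisson algebra is a commutative associative algebra $(\mathcal P,\cdot)$ with a Lie bracket $[-,-]$ satisfying $[x,y\cdot z]=[x,y]\cdot z+y\cdot[x,z]$. An ideal of a Poisson algebra is a subspace closed under multiplication by arbitrary elements with respect to both $\cdot$ and $[-,-]$. A Poisson $n$-Lie algebra is a commutative associative algebra with an $n$-linear skew-symmetric bracket satisfying the fundamental identity $[x_1,\dots,x_{n-1},[y_1,\dots,y_n]]=\sum_{i=1}^n[y_1,\dots,[x_1,\dots,x_{n-1},y_i],\dots,y_n]$ and the Leibniz rule $[y\cdot z,x_2,\dots,x_n]=y\cdot[z,x_2,\dots,x_n]+z\cdot[y,x_2,\dots,x_n]$. *)

theory Defs
  imports Complex_Main
begin

definition bilinear_map ::
  "('k::field \<Rightarrow> 'a::ab_group_add \<Rightarrow> 'a) \<Rightarrow> ('k \<Rightarrow> 'b::ab_group_add \<Rightarrow> 'b)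
   \<Rightarrow> ('k \<Rightarrow> 'c::ab_group_add \<Rightarrow> 'c) \<Rightarrow> ('a \<Rightarrow> 'b \<Rightarrow> 'c) \<Rightarrow> bool" where
  "bilinear_map sa sb sc f \<longleftrightarrow>
     (\<forall>x. Vector_Spaces.linear sb sc (f x)) \<and> (\<forall>y. Vector_Spaces.linear sa sc (\<lambda>x. f x y))"

definition poisson_algebra ::
  "('k::field \<Rightarrow> 'a::ab_group_add \<Rightarrow> 'a) \<Rightarrow> ('a \<Rightarrow> 'a \<Rightarrow> 'a) \<Rightarrow> ('a \<Rightarrow> 'a \<Rightarrow> 'a) \<Rightarrow> bool" where
  "poisson_algebra s mult br \<longleftrightarrow>
     vector_space s \<and>
     bilinear_map s s s mult \<and>
     (\<forall>x y z. mult (mult x y) z = mult x (mult y z)) \<and>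
     (\<forall>x y. mult x y = mult y x) \<and>
     bilinear_map s s s br \<and>
     (\<forall>x. br x x = 0) \<and>
     (\<forall>x y z. br x (br y z) + br y (br z x) + br z (br x y) = 0) \<and>
     (\<forall>x y z. br x (mult y z) = mult (br x y) z + mult y (br x z))"

text \<open>Over a field, the universal property for scalar-valued bilinear maps
  characterises the tensor product up to unique isomorphism.\<close>
definition is_tensor_product ::
  "('k::field \<Rightarrow> 'a::ab_group_add \<Rightarrow> 'a) \<Rightarrow> ('k \<Rightarrow> 'b::ab_group_add \<Rightarrow> 'b)
   \<Rightarrow> ('k \<Rightarrow> 't::ab_group_add \<Rightarrow> 't) \<Rightarrow> ('a \<Rightarrow> 'b \<Rightarrow> 't) \<Rightarrow> bool" where
  "is_tensor_product sa sb st tp \<longleftrightarrow>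
     bilinear_map sa sb st tp \<and>
     (\<forall>h. bilinear_map sa sb ((*) :: 'k \<Rightarrow> 'k \<Rightarrow> 'k) h \<longrightarrow>
        (\<exists>!g. Vector_Spaces.linear st ((*) :: 'k \<Rightarrow> 'k \<Rightarrow> 'k) g \<and> (\<forall>x y. g (tp x y) = h x y)))"

fun nbr :: "('t::zero \<Rightarrow> 't \<Rightarrow> 't) \<Rightarrow> 't list \<Rightarrow> 't" where
  "nbr br [] = 0"
| "nbr br [x] = x"
| "nbr br (x # y # ys) = br x (nbr br (y # ys))"

definition poisson_ideal ::
  "('k::field \<Rightarrow> 'a::ab_group_add \<Rightarrow> 'a) \<Rightarrow> ('a \<Rightarrow> 'a \<Rightarrow> 'a) \<Rightarrow> ('a \<Rightarrow> 'a \<Rightarrow> 'a) \<Rightarrow> 'a set \<Rightarrow> bool" where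
  "poisson_ideal s mult br J \<longleftrightarrow>
     module.subspace s J \<and>
     (\<forall>x\<in>J. \<forall>y. mult y x \<in> J \<and> mult x y \<in> J \<and> br y x \<in> J \<and> br x y \<in> J)"

definition generated_poisson_ideal ::
  "('k::field \<Rightarrow> 'a::ab_group_add \<Rightarrow> 'a) \<Rightarrow> ('a \<Rightarrow> 'a \<Rightarrow> 'a) \<Rightarrow> ('a \<Rightarrow> 'a \<Rightarrow> 'a) \<Rightarrow> 'a set \<Rightarrow> 'a set" where
  "generated_poisson_ideal s mult br S = \<Inter>{J. poisson_ideal s mult br J \<and> S \<subseteq> J}"

definition swap_generators :: "nat \<Rightarrow> ('a::ab_group_add \<Rightarrow> 'a \<Rightarrow> 'a) \<Rightarrow> 'a set" where
  "swap_generators n br =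
     {nbr br xs + nbr br (xs[i := xs ! j, j := xs ! i]) | xs i j. length xs = n \<and> i < j \<and> j < n}"

text \<open>Since quotient types cannot be
  formed inside a statement, this is expressed as: I is a subspace, the operations
  descend to T/I, and all Poisson n-Lie axioms hold modulo I.\<close>
definition quotient_is_poisson_nlie ::
  "('k::field \<Rightarrow> 't::ab_group_add \<Rightarrow> 't) \<Rightarrow> ('t \<Rightarrow> 't \<Rightarrow> 't) \<Rightarrow> ('t list \<Rightarrow> 't) \<Rightarrow> nat \<Rightarrow> 't set \<Rightarrow> bool" where
  "quotient_is_poisson_nlie s mult nb n I \<longleftrightarrow>
     module.subspace s I \<and>
     \<comment> \<open>the product descends to T/I\<close>
     (\<forall>x\<in>I. \<forall>y. mult y x \<in> I \<and> mult x y \<in> I) \<and>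
     \<comment> \<open>T/I is a commutative associative algebra\<close>
     (\<forall>c x y z. mult (s c x + y) z - (s c (mult x z) + mult y z) \<in> I) \<and>
     (\<forall>c x y z. mult z (s c x + y) - (s c (mult z x) + mult z y) \<in> I) \<and>
     (\<forall>x y z. mult (mult x y) z - mult x (mult y z) \<in> I) \<and>
     (\<forall>x y. mult x y - mult y x \<in> I) \<and>
     \<comment> \<open>the n-ary bracket descends to T/I\<close>
     (\<forall>xs ys. length xs = n \<and> length ys = n \<and> (\<forall>i<n. xs ! i - ys ! i \<in> I)
        \<longrightarrow> nb xs - nb ys \<in> I) \<and>
     \<comment> \<open>multilinearity\<close>
     (\<forall>xs i c x y. length xs = n \<and> i < n \<longrightarrow>
        nb (xs[i := s c x + y]) - (s c (nb (xs[i := x])) + nb (xs[i := y])) \<in> I) \<and>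
     \<comment> \<open>skew-symmetry\<close>
     (\<forall>xs i j. length xs = n \<and> i < j \<and> j < n \<longrightarrow>
        nb (xs[i := xs ! j, j := xs ! i]) + nb xs \<in> I) \<and>
     \<comment> \<open>fundamental identity\<close>
     (\<forall>xs ys. length xs = n - 1 \<and> length ys = n \<longrightarrow>
        nb (xs @ [nb ys]) - (\<Sum>i<n. nb (ys[i := nb (xs @ [ys ! i])])) \<in> I) \<and>
     \<comment> \<open>Leibniz rule\<close>
     (\<forall>y z xs. length xs = n - 1 \<longrightarrow>
        nb (mult y z # xs) - (mult y (nb (z # xs)) + mult z (nb (y # xs))) \<in> I)"

end

theory Submission
  imports Defs
begin

(* The tensor product is again a Poisson algebra: each axiom is an identity that is additive
   in every argument and holds on pure tensors, and the universal property forces the pure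
   tensors to span.  From then on only the Poisson structure matters.  Multilinearity and the
   Leibniz rule of the nested bracket hold exactly, skew-symmetry holds modulo I by
   construction, and for n = 2 the fundamental identity is the Jacobi identity.  For n >= 3
   every nested bracket of n + 1 elements lies in I: modulo I, the element
   X(w,x,y,z) = [p_1,...,p_(n-3),w,[x,[y,z]]] changes sign under each adjacent swap of w, x, y, z
   (swap generators, applied to the outer three or, inside [w,-], to the inner three slots),
   and the Jacobi identity expresses [p_1,...,p_(n-3),[w,x],[y,z]] both as 2 X(w,x,y,z) and,
   after an even permutation, as X(w,x,y,z); hence X is in I.  Every term of the fundamental
   identity is such a bracket, so both of its sides vanish in the quotient. *)

lemma vector_space_field: "vector_space ((*) :: 'k::field \<Rightarrow> 'k \<Rightarrow> 'k)"
  by unfold_locales (auto simp: algebra_simps)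

lemma bilinear_map_module_hom:
  assumes "bilinear_map sa sb sc f"
  shows "module_hom sa sc (\<lambda>x. f x y)" and "module_hom sb sc (f x)"
  using assms by (auto simp: bilinear_map_def module_hom_iff_linear)

lemma bilinear_map_vector_spaces:
  assumes "bilinear_map sa sb sc f"
  shows "vector_space sa" and "vector_space sb" and "vector_space sc"
  using assms unfolding bilinear_map_def Vector_Spaces.linear_iff by blast+

lemma bilinear_map_simps:
  assumes "bilinear_map sa sb sc f"
  shows "f (a + a') b = f a b + f a' b" and "f a (b + b') = f a b + f a b'"
    and "f (sa c a) b = sc c (f a b)" and "f a (sb c b) = sc c (f a b)"
    and "f (- a) b = - f a b" and "f a (- b) = - f a b"
    and "f (a - a') b = f a b - f a' b" and "f a (b - b') = f a b - f a b'"
    and "f 0 b = 0" and "f a 0 = 0"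
proof -
  interpret L: module_hom sa sc "\<lambda>x. f x b"
    by (rule bilinear_map_module_hom(1)[OF assms])
  interpret R: module_hom sb sc "f a"
    by (rule bilinear_map_module_hom(2)[OF assms])
  show "f (a + a') b = f a b + f a' b" "f a (b + b') = f a b + f a b'"
    "f (sa c a) b = sc c (f a b)" "f a (sb c b) = sc c (f a b)"
    "f (- a) b = - f a b" "f a (- b) = - f a b"
    "f (a - a') b = f a b - f a' b" "f a (b - b') = f a b - f a b'"
    "f 0 b = 0" "f a 0 = 0"
    by (fact L.add R.add L.scale R.scale L.neg R.neg L.diff R.diff L.zero R.zero)+
qed

lemma tensor_product_spanned:
  fixes st :: "'k::field \<Rightarrow> 't::ab_group_add \<Rightarrow> 't"
  assumes tensor: "is_tensor_product sa sb st tp"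
  shows "module.span st (range (case_prod tp)) = UNIV"
proof -
  have tp: "bilinear_map sa sb st tp"
    using tensor by (simp add: is_tensor_product_def)
  interpret T: vector_space st
    by (rule bilinear_map_vector_spaces(3)[OF tp])
  interpret vector_space_pair st "(*) :: 'k \<Rightarrow> 'k \<Rightarrow> 'k"
    by (intro vector_space_pair.intro T.vector_space_axioms vector_space_field)
  let ?P = "range (case_prod tp)"
  show ?thesis
  proof (rule ccontr)
    assume "T.span ?P \<noteq> UNIV"
    then obtain v where v: "v \<notin> T.span ?P" by blast
    obtain B where B: "B \<subseteq> ?P" "T.independent B" "?P \<subseteq> T.span B"
      by (rule T.maximal_independent_subset)
    have span_B: "T.span B = T.span ?P"
      using B by (auto simp: T.span_eq intro: T.span_base)
    have indep: "T.independent (insert v B)"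
      using v B(2) by (simp add: T.independent_insertI span_B)
    \<comment> \<open>a functional that kills every pure tensor but not \<open>v\<close>\<close>
    define \<phi> where "\<phi> = construct (insert v B) (\<lambda>b. if b = v then 1 else 0)"
    have \<phi>_linear: "Vector_Spaces.linear st (*) \<phi>"
      unfolding \<phi>_def by (rule linear_construct[OF indep])
    have \<phi>_B: "\<phi> b = 0" if "b \<in> B" for b
    proof -
      have "b \<noteq> v" using that v B(1) T.span_base by blast
      then show ?thesis using that by (simp add: \<phi>_def construct_basis[OF indep])
    qed
    have \<phi>_pure: "\<phi> (tp x y) = 0" for x y
    proof (rule linear_eq_0_on_span[OF \<phi>_linear \<phi>_B])
      show "tp x y \<in> T.span B" using B(3) by auto
    qed
    have "bilinear_map sa sb ((*) :: 'k \<Rightarrow> 'k \<Rightarrow> 'k) (\<lambda>x y. 0)"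
      using bilinear_map_vector_spaces[OF tp] vector_space_field
      by (simp add: bilinear_map_def Vector_Spaces.linear_iff)
    then have "\<exists>!g. Vector_Spaces.linear st (*) g \<and> (\<forall>x y. g (tp x y) = 0)"
      using tensor unfolding is_tensor_product_def by blast
    moreover have "Vector_Spaces.linear st ((*) :: 'k \<Rightarrow> 'k \<Rightarrow> 'k) (\<lambda>_. 0)"
      using T.vector_space_axioms vector_space_field by (simp add: Vector_Spaces.linear_iff)
    ultimately have "\<phi> = (\<lambda>_. 0)"
      using \<phi>_linear \<phi>_pure by blast
    moreover have "\<phi> v = 1"
      by (simp add: \<phi>_def construct_basis[OF indep])
    ultimately show False by simp
  qed
qed

text \<open>Additivity suffices, since scalar multiples of pure tensors are pure tensors.\<close>

lemma tensor_product_additive_eq_0: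
  fixes f :: "'t::ab_group_add \<Rightarrow> 'c::ab_group_add"
  assumes tensor: "is_tensor_product sa sb st tp"
    and add: "\<And>u v. f (u + v) = f u + f v"
    and pure: "\<And>x y. f (tp x y) = 0"
  shows "f u = 0"
proof -
  have tp: "bilinear_map sa sb st tp"
    using tensor by (simp add: is_tensor_product_def)
  interpret T: vector_space st
    by (rule bilinear_map_vector_spaces(3)[OF tp])
  have "u \<in> T.span (range (case_prod tp))"
    using tensor_product_spanned[OF tensor] by simp
  then show ?thesis
  proof (induction rule: T.span_induct_alt)
    case base
    have "f 0 = f 0 + f 0" using add[of 0 0] by (simp only: add_0)
    then show ?case by (rule add_cancel_right_right[THEN iffD1])
  next
    case (step c x y)
    then obtain a b where "x = tp a b" by auto
    then have "st c x = tp (sa c a) b"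
      by (simp add: bilinear_map_simps(3)[OF tp])
    then show ?case using step.IH by (simp add: add pure)
  qed
qed

lemma tensor_product_biadditive_eq_0:
  fixes f :: "'t::ab_group_add \<Rightarrow> 't \<Rightarrow> 'c::ab_group_add"
  assumes tensor: "is_tensor_product sa sb st tp"
    and add_left: "\<And>u u' v. f (u + u') v = f u v + f u' v"
    and add_right: "\<And>u v v'. f u (v + v') = f u v + f u v'"
    and pure: "\<And>x y x' y'. f (tp x y) (tp x' y') = 0"
  shows "f u v = 0"
proof -
  have "f u (tp x' y') = 0" for x' y'
    using tensor_product_additive_eq_0[OF tensor, of "\<lambda>u. f u (tp x' y')"] add_left pure by blast
  then show ?thesis
    using tensor_product_additive_eq_0[OF tensor, of "f u"] add_right by blast
qed

lemma tensor_product_triadditive_eq_0: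
  fixes f :: "'t::ab_group_add \<Rightarrow> 't \<Rightarrow> 't \<Rightarrow> 'c::ab_group_add"
  assumes tensor: "is_tensor_product sa sb st tp"
    and add1: "\<And>u u' v w. f (u + u') v w = f u v w + f u' v w"
    and add2: "\<And>u v v' w. f u (v + v') w = f u v w + f u v' w"
    and add3: "\<And>u v w w'. f u v (w + w') = f u v w + f u v w'"
    and pure: "\<And>x y x' y' x'' y''. f (tp x y) (tp x' y') (tp x'' y'') = 0"
  shows "f u v w = 0"
proof -
  have "f u v (tp x'' y'') = 0" for x'' y''
    using tensor_product_biadditive_eq_0[OF tensor, of "\<lambda>u v. f u v (tp x'' y'')"] add1 add2 pure
    by blast
  then show ?thesis
    using tensor_product_additive_eq_0[OF tensor, of "f u v"] add3 by blast
qed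

locale poisson =
  fixes s :: "'k::field \<Rightarrow> 'a::ab_group_add \<Rightarrow> 'a" and mult br :: "'a \<Rightarrow> 'a \<Rightarrow> 'a"
  assumes poisson_algebra: "poisson_algebra s mult br"
begin

sublocale vector_space s
  using poisson_algebra by (simp add: poisson_algebra_def)

lemma mult_bilinear: "bilinear_map s s s mult"
  using poisson_algebra by (simp add: poisson_algebra_def)

lemma br_bilinear: "bilinear_map s s s br"
  using poisson_algebra by (simp add: poisson_algebra_def)

lemmas mult_simps = bilinear_map_simps[OF mult_bilinear]
lemmas br_simps = bilinear_map_simps[OF br_bilinear]

lemma mult_assoc: "mult (mult x y) z = mult x (mult y z)"
  using poisson_algebra unfolding poisson_algebra_def by blast

lemma mult_commute: "mult x y = mult y x"
  using poisson_algebra unfolding poisson_algebra_def by blast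

lemma mult_left_commute: "mult x (mult y z) = mult y (mult x z)"
  by (simp only: mult_assoc[symmetric] mult_commute[of x y])

lemmas mult_ac = mult_assoc mult_commute mult_left_commute

lemma br_self: "br x x = 0"
  using poisson_algebra by (simp add: poisson_algebra_def)

lemma br_jacobi: "br x (br y z) + br y (br z x) + br z (br x y) = 0"
  using poisson_algebra by (simp add: poisson_algebra_def)

lemma br_leibniz: "br x (mult y z) = mult (br x y) z + mult y (br x z)"
  using poisson_algebra by (simp add: poisson_algebra_def)

lemma br_anticomm: "br x y = - br y x"
proof -
  have "br x y + br y x = br (x + y) (x + y)"
    by (simp only: br_simps(1,2)) (simp add: br_self)
  then show ?thesis by (simp add: br_self eq_neg_iff_add_eq_0)
qed

lemma br_jacobi_left: "br (br x y) z = br x (br y z) - br y (br x z)"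
  using br_jacobi[of x y z] br_anticomm[of z x] br_anticomm[of z "br x y"] br_simps(6)
  by (simp add: algebra_simps eq_neg_iff_add_eq_0)

lemma br_jacobi_exchange: "br x (br y z) = br y (br x z) - br z (br x y)"
  using br_jacobi_left[of x y z] br_anticomm[of "br x y" z] by (simp add: algebra_simps)

lemma br_leibniz_left: "br (mult y z) x = mult y (br z x) + mult z (br y x)"
proof -
  have "br (mult y z) x = - (mult (br x y) z + mult y (br x z))"
    by (simp add: br_anticomm[of "mult y z"] br_leibniz)
  also have "\<dots> = mult y (br z x) + mult z (br y x)"
    by (simp add: br_anticomm[of x] mult_simps mult_commute[of _ z])
  finally show ?thesis .
qed

lemma generated_poisson_ideal:
  "poisson_ideal s mult br (generated_poisson_ideal s mult br S)"
  "S \<subseteq> generated_poisson_ideal s mult br S"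
  unfolding generated_poisson_ideal_def poisson_ideal_def
  by (auto intro!: subspace_Inter)

end

locale poisson_tensor_product = P1: poisson s1 mult1 br1 + P2: poisson s2 mult2 br2
  for s1 :: "'k::field \<Rightarrow> 'a::ab_group_add \<Rightarrow> 'a" and mult1 br1
    and s2 :: "'k \<Rightarrow> 'b::ab_group_add \<Rightarrow> 'b" and mult2 br2 +
  fixes s :: "'k \<Rightarrow> 't::ab_group_add \<Rightarrow> 't" and tp :: "'a \<Rightarrow> 'b \<Rightarrow> 't"
    and mult br :: "'t \<Rightarrow> 't \<Rightarrow> 't"
  assumes tensor: "is_tensor_product s1 s2 s tp"
    and mult_bilinear: "bilinear_map s s s mult"
    and br_bilinear: "bilinear_map s s s br"
    and mult_tp: "\<And>x1 y1 x2 y2. mult (tp x1 y1) (tp x2 y2) = tp (mult1 x1 x2) (mult2 y1 y2)"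
    and br_tp: "\<And>x1 y1 x2 y2. br (tp x1 y1) (tp x2 y2) =
                  tp (br1 x1 x2) (mult2 y1 y2) + tp (mult1 x1 x2) (br2 y1 y2)"
begin

lemma tp_bilinear: "bilinear_map s1 s2 s tp"
  using tensor by (simp add: is_tensor_product_def)

lemmas tp_simps = bilinear_map_simps[OF tp_bilinear]
  and mult_simps = bilinear_map_simps[OF mult_bilinear]
  and br_simps = bilinear_map_simps[OF br_bilinear]

lemmas biadditive_eq_0 = tensor_product_biadditive_eq_0[OF tensor]
  and triadditive_eq_0 = tensor_product_triadditive_eq_0[OF tensor]

lemma mult_commute: "mult u v = mult v u"
  using biadditive_eq_0[where f = "\<lambda>u v. mult u v - mult v u"]
  by (simp add: mult_simps mult_tp P1.mult_commute P2.mult_commute)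

lemma mult_assoc: "mult (mult u v) w = mult u (mult v w)"
  using triadditive_eq_0[where f = "\<lambda>u v w. mult (mult u v) w - mult u (mult v w)"]
  by (simp add: mult_simps mult_tp P1.mult_assoc P2.mult_assoc)

lemma br_leibniz: "br u (mult v w) = mult (br u v) w + mult v (br u w)"
  using triadditive_eq_0[where f = "\<lambda>u v w. br u (mult v w) - (mult (br u v) w + mult v (br u w))"]
  by (simp add: mult_simps br_simps mult_tp br_tp tp_simps P1.br_leibniz P2.br_leibniz
      P1.mult_ac P2.mult_ac algebra_simps)

lemma br_anticomm_pure: "br (tp x y) (tp x' y') + br (tp x' y') (tp x y) = 0"
  by (simp add: br_tp tp_simps P1.br_anticomm[of x' x] P2.br_anticomm[of y' y]
      P1.mult_commute[of x' x] P2.mult_commute[of y' y])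

lemma br_anticomm: "br u v + br v u = 0"
  using biadditive_eq_0[where f = "\<lambda>u v. br u v + br v u"]
  by (simp add: br_simps br_anticomm_pure algebra_simps)

text \<open>Alternation does not follow from skew-symmetry in characteristic 2; instead, skew-symmetry
  makes \<open>u \<mapsto> br u u\<close> additive.\<close>

lemma br_self: "br u u = 0"
  using tensor_product_additive_eq_0[OF tensor, where f = "\<lambda>u. br u u"]
  by (simp add: br_simps br_tp tp_simps P1.br_self P2.br_self br_anticomm algebra_simps)

lemma br_br_pure:
  "br (tp x1 y1) (br (tp x2 y2) (tp x3 y3)) =
      tp (br1 x1 (br1 x2 x3)) (mult2 y1 (mult2 y2 y3)) + tp (mult1 x1 (br1 x2 x3)) (br2 y1 (mult2 y2 y3))
    + (tp (br1 x1 (mult1 x2 x3)) (mult2 y1 (br2 y2 y3)) + tp (mult1 x1 (mult1 x2 x3)) (br2 y1 (br2 y2 y3)))"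
  by (simp add: br_tp br_simps)

lemma br_jacobi_pure:
  "br (tp x1 y1) (br (tp x2 y2) (tp x3 y3)) + br (tp x2 y2) (br (tp x3 y3) (tp x1 y1))
    + br (tp x3 y3) (br (tp x1 y1) (tp x2 y2)) = 0"
  unfolding br_br_pure
  by (simp add: P1.br_leibniz P2.br_leibniz P1.br_anticomm[of x3 x1] P1.br_anticomm[of x2 x1]
      P1.br_anticomm[of x3 x2] P2.br_anticomm[of y3 y1] P2.br_anticomm[of y2 y1]
      P2.br_anticomm[of y3 y2] P1.br_jacobi_exchange[of x1 x2 x3] P2.br_jacobi_exchange[of y1 y2 y3]
      P1.br_simps P2.br_simps P1.mult_simps P2.mult_simps tp_simps P1.mult_ac P2.mult_ac
      algebra_simps)

lemma br_jacobi: "br u (br v w) + br v (br w u) + br w (br u v) = 0"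
  using triadditive_eq_0[where f = "\<lambda>u v w. br u (br v w) + br v (br w u) + br w (br u v)",
      OF _ _ _ br_jacobi_pure]
  by (simp add: br_simps algebra_simps)

lemma tensor_poisson_algebra: "poisson_algebra s mult br"
  unfolding poisson_algebra_def
  using bilinear_map_vector_spaces(3)[OF mult_bilinear] mult_bilinear br_bilinear mult_assoc
    mult_commute br_self br_jacobi br_leibniz
  by blast

end

lemma nbr_Cons: "xs \<noteq> [] \<Longrightarrow> nbr br (x # xs) = br x (nbr br xs)"
  by (cases xs) auto

lemma nbr_append: "ys \<noteq> [] \<Longrightarrow> nbr br (xs @ ys) = foldr br xs (nbr br ys)"
  by (induction xs) (auto simp: nbr_Cons)

context poisson
begin

lemma nbr_list_update_linear:
  "i < length xs \<Longrightarrow> nbr br (xs[i := s c x + y]) = s c (nbr br (xs[i := x])) + nbr br (xs[i := y])"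
proof (induction xs arbitrary: i)
  case Nil
  then show ?case by simp
next
  case (Cons a xs)
  show ?case
  proof (cases i)
    case 0
    then show ?thesis by (cases xs) (simp_all add: br_simps)
  next
    case (Suc j)
    with Cons.prems have "j < length xs" "xs \<noteq> []" by auto
    with Suc show ?thesis by (simp add: nbr_Cons Cons.IH br_simps)
  qed
qed

lemma nbr_mult_Cons:
  "xs \<noteq> [] \<Longrightarrow> nbr br (mult y z # xs) = mult y (nbr br (z # xs)) + mult z (nbr br (y # xs))"
  by (simp add: nbr_Cons br_leibniz_left)

lemma foldr_br_uminus: "foldr br P (- a) = - foldr br P a"
  by (induction P) (simp_all add: br_simps)

lemma foldr_br_diff: "foldr br P (a - b) = foldr br P a - foldr br P b"
  by (induction P) (simp_all add: br_simps)

end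

locale poisson_quotient = poisson +
  fixes I
  assumes ideal: "poisson_ideal s mult br I"
begin

lemma ideal_subspace: "subspace I"
  using ideal by (simp add: poisson_ideal_def)

lemma ideal_closed:
  "x \<in> I \<Longrightarrow> mult y x \<in> I" "x \<in> I \<Longrightarrow> mult x y \<in> I"
  "x \<in> I \<Longrightarrow> br y x \<in> I" "x \<in> I \<Longrightarrow> br x y \<in> I"
  using ideal by (simp_all add: poisson_ideal_def)

definition cong (infix \<open>\<sim>\<close> 50)
  where "x \<sim> y \<longleftrightarrow> x - y \<in> I"

lemma in_ideal_iff_cong_0: "x \<in> I \<longleftrightarrow> x \<sim> 0"
  by (simp add: cong_def)

lemma cong_refl [simp]: "x \<sim> x"
  by (simp add: cong_def subspace_0[OF ideal_subspace])

lemma cong_sym: "x \<sim> y \<Longrightarrow> y \<sim> x"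
  using subspace_neg[OF ideal_subspace, of "x - y"] by (simp add: cong_def)

lemma cong_trans [trans]: "x \<sim> y \<Longrightarrow> y \<sim> z \<Longrightarrow> x \<sim> z"
  using subspace_add[OF ideal_subspace, of "x - y" "y - z"] by (simp add: cong_def)

lemma cong_add: "a \<sim> b \<Longrightarrow> c \<sim> d \<Longrightarrow> a + c \<sim> b + d"
  using subspace_add[OF ideal_subspace, of "a - b" "c - d"] by (simp add: cong_def algebra_simps)

lemma cong_uminus: "a \<sim> b \<Longrightarrow> - a \<sim> - b"
  using subspace_neg[OF ideal_subspace, of "a - b"] by (simp add: cong_def)

lemma cong_br: "a \<sim> b \<Longrightarrow> c \<sim> d \<Longrightarrow> br a c \<sim> br b d"
proof -
  assume "a \<sim> b" "c \<sim> d"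
  then have "br (a - b) c + br b (c - d) \<in> I"
    by (simp add: cong_def ideal_closed subspace_add[OF ideal_subspace])
  then show "br a c \<sim> br b d"
    by (simp add: cong_def br_simps)
qed

lemma nbr_cong: "list_all2 (\<sim>) xs ys \<Longrightarrow> nbr br xs \<sim> nbr br ys"
proof (induction xs arbitrary: ys)
  case Nil
  then show ?case by simp
next
  case (Cons x xs)
  then obtain y ys' where ys: "ys = y # ys'" "x \<sim> y" "list_all2 (\<sim>) xs ys'"
    by (cases ys) auto
  show ?case
  proof (cases "xs = []")
    case True
    with ys show ?thesis by simp
  next
    case False
    with ys have "ys' \<noteq> []" by (cases ys') auto
    with False ys Cons.IH show ?thesis by (simp add: nbr_Cons cong_br)
  qed
qed

context
  fixes n :: nat
  assumes swaps: "swap_generators n br \<subseteq> I"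
begin

lemma nbr_swap_cong:
  assumes "length xs = n" "i < j" "j < n"
  shows "nbr br (xs[i := xs ! j, j := xs ! i]) \<sim> - nbr br xs"
proof -
  have "nbr br xs + nbr br (xs[i := xs ! j, j := xs ! i]) \<in> I"
    using swaps assms unfolding swap_generators_def by blast
  then show ?thesis by (simp add: cong_def add.commute)
qed

lemma foldr_swap_outer_cong:
  assumes "length P = n - 3" "3 \<le> n"
  shows "foldr br P (br a (br b c)) \<sim> - foldr br P (br b (br a c))"
proof -
  let ?xs = "P @ [b, a, c]"
  have "nbr br (?xs[length P := ?xs ! Suc (length P), Suc (length P) := ?xs ! length P])
      \<sim> - nbr br ?xs"
    by (rule nbr_swap_cong) (use assms in auto)
  then show ?thesis by (simp add: nbr_append nth_append list_update_append)
qed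

lemma foldr_swap_inner_cong:
  assumes "length P = n - 3" "3 \<le> n"
  shows "foldr br P (br a (br b (br c d))) \<sim> - foldr br P (br a (br c (br b d)))"
proof -
  obtain h Q where hQ: "P @ [a] = h # Q"
    by (cases "P @ [a]") auto
  have "length Q = n - 3"
    using arg_cong[OF hQ, of length] assms by simp
  then have "br h (foldr br Q (br b (br c d))) \<sim> br h (- foldr br Q (br c (br b d)))"
    by (intro cong_br cong_refl foldr_swap_outer_cong assms(2))
  moreover have "foldr br P (br a t) = br h (foldr br Q t)" for t
    using arg_cong[OF hQ, of "\<lambda>xs. foldr br xs t"] by simp
  ultimately show ?thesis
    by (simp add: foldr_br_uminus br_simps)
qed

lemma nested_bracket_in_ideal:
  assumes "length P = n - 3" "3 \<le> n"
  shows "foldr br P (br w (br x (br y z))) \<in> I"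
proof -
  note outer = foldr_swap_outer_cong[OF assms] and inner = foldr_swap_inner_cong[OF assms]
  define X where "X a b c d = foldr br P (br a (br b (br c d)))" for a b c d
  have "X w x y z \<sim> - X w y x z"
    unfolding X_def by (rule inner)
  also have "- X w y x z = X w y z x"
    by (simp add: X_def br_anticomm[of x z] br_simps foldr_br_uminus)
  also have "X w y z x \<sim> - X y w z x"
    unfolding X_def by (rule outer)
  also have "- X y w z x \<sim> X y z w x"
    unfolding X_def using cong_uminus[OF inner[of y w z x]] by simp
  also have "X y z w x = - foldr br P (br y (br (br w x) z))"
    by (simp add: X_def br_anticomm[of z] br_simps foldr_br_uminus)
  also have "\<dots> \<sim> foldr br P (br (br w x) (br y z))"
    using cong_uminus[OF outer[of y "br w x" z]] by simp
  also have "\<dots> = X w x y z - X x w y z"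
    by (simp add: X_def br_jacobi_left foldr_br_diff)
  also have "\<dots> \<sim> X w x y z + X w x y z"
    unfolding X_def using cong_add[OF cong_refl cong_uminus[OF outer[of x w "br y z"]]] by simp
  finally have "- X w x y z \<in> I"
    by (simp add: cong_def)
  from subspace_neg[OF ideal_subspace this] show ?thesis
    by (simp add: X_def)
qed

lemma nbr_length_Suc_in_ideal:
  assumes "length xs = Suc n" "3 \<le> n"
  shows "nbr br xs \<in> I"
proof -
  have "length (drop (n - 3) xs) = 4"
    using assms by simp
  then obtain w x y z where wxyz: "drop (n - 3) xs = [w, x, y, z]"
    by (auto simp del: length_drop simp: length_Suc_conv numeral_eq_Suc)
  have "nbr br xs = nbr br (take (n - 3) xs @ [w, x, y, z])"
    by (simp flip: wxyz)
  also have "\<dots> = foldr br (take (n - 3) xs) (br w (br x (br y z)))"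
    by (simp add: nbr_append)
  finally show ?thesis
    using nested_bracket_in_ideal[of "take (n - 3) xs"] assms by simp
qed

lemma nbr_bracket_entry_in_ideal:
  assumes "length xs = n" "i < n" "xs ! i = br a b" "3 \<le> n"
  shows "nbr br xs \<in> I"
proof -
  have last: "nbr br ys \<in> I" if "length ys = n" "ys ! (n - 1) = br a b" for ys
  proof -
    have "ys \<noteq> []"
      using that assms(4) by auto
    moreover have "last ys = br a b"
      using calculation that by (simp add: last_conv_nth)
    ultimately have "nbr br ys = nbr br (butlast ys @ [br a b])"
      by (metis append_butlast_last_id)
    also have "\<dots> = nbr br (butlast ys @ [a, b])"
      by (simp add: nbr_append)
    finally have "nbr br ys = nbr br (butlast ys @ [a, b])" .
    then show ?thesis
      using nbr_length_Suc_in_ideal[of "butlast ys @ [a, b]"] that assms(4) by simp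
  qed
  show ?thesis
  proof (cases "i = n - 1")
    case True
    with assms last show ?thesis by simp
  next
    case False
    let ?ys = "xs[i := xs ! (n - 1), n - 1 := xs ! i]"
    have "- nbr br xs \<sim> nbr br ?ys"
      by (rule cong_sym, rule nbr_swap_cong) (use assms False in auto)
    also have "nbr br ?ys \<sim> 0"
      using last[of ?ys] assms by (simp add: in_ideal_iff_cong_0)
    finally have "- nbr br xs \<sim> 0" .
    from cong_uminus[OF this] show ?thesis
      by (simp add: in_ideal_iff_cong_0)
  qed
qed

lemma nbr_fundamental_identity_cong:
  assumes "2 \<le> n" "length xs = n - 1" "length ys = n"
  shows "nbr br (xs @ [nbr br ys]) \<sim> (\<Sum>i<n. nbr br (ys[i := nbr br (xs @ [ys ! i])]))"
proof (cases "n = 2")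
  case True
  then obtain x y1 y2 where "xs = [x]" "ys = [y1, y2]"
    using assms by (auto simp: length_Suc_conv numeral_2_eq_2)
  with True show ?thesis
    by (simp add: numeral_2_eq_2 br_jacobi_left)
next
  case False
  with assms have n: "3 \<le> n" by simp
  then obtain x xs' where xs: "xs = x # xs'" "xs' \<noteq> []"
    using assms(2) by (cases xs; cases "tl xs") auto
  obtain y ys' where ys: "ys = y # ys'" "ys' \<noteq> []"
    using assms(3) n by (cases ys; cases "tl ys") auto
  have "nbr br (xs @ [nbr br ys]) \<in> I"
    by (rule nbr_bracket_entry_in_ideal[of _ "n - 1" y "nbr br ys'"])
      (use assms n ys in \<open>auto simp: nth_append nbr_Cons\<close>)
  moreover have "(\<Sum>i<n. nbr br (ys[i := nbr br (xs @ [ys ! i])])) \<in> I"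
  proof (rule subspace_sum[OF ideal_subspace])
    fix i assume "i \<in> {..<n}"
    then show "nbr br (ys[i := nbr br (xs @ [ys ! i])]) \<in> I"
      by (intro nbr_bracket_entry_in_ideal[of _ i x "nbr br (xs' @ [ys ! i])"])
        (use assms n xs in \<open>auto simp: nbr_Cons\<close>)
  qed
  ultimately show ?thesis
    by (simp add: cong_def subspace_diff[OF ideal_subspace])
qed

lemma quotient_is_poisson_nlieI:
  assumes n: "2 \<le> n"
  shows "quotient_is_poisson_nlie s mult (nbr br) n I"
  unfolding quotient_is_poisson_nlie_def
proof (intro conjI allI impI ballI)
  have zero: "0 \<in> I"
    by (rule subspace_0[OF ideal_subspace])
  show "subspace I"
    by (rule ideal_subspace)
  show "mult y x \<in> I" "mult x y \<in> I" if "x \<in> I" for x y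
    using that by (simp_all add: ideal_closed)
  show "mult (s c x + y) z - (s c (mult x z) + mult y z) \<in> I"
    "mult z (s c x + y) - (s c (mult z x) + mult z y) \<in> I" for c x y z
    by (simp_all add: mult_simps zero)
  show "mult (mult x y) z - mult x (mult y z) \<in> I" "mult x y - mult y x \<in> I" for x y z
    by (simp_all add: mult_assoc mult_commute[of x] zero)
  show "nbr br xs - nbr br ys \<in> I"
    if "length xs = n \<and> length ys = n \<and> (\<forall>i<n. xs ! i - ys ! i \<in> I)" for xs ys
    using nbr_cong[of xs ys] that by (simp add: cong_def list_all2_conv_all_nth)
  show "nbr br (xs[i := s c x + y]) - (s c (nbr br (xs[i := x])) + nbr br (xs[i := y])) \<in> I"
    if "length xs = n \<and> i < n" for xs i c x y
    using that by (simp add: nbr_list_update_linear zero)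
  show "nbr br (xs[i := xs ! j, j := xs ! i]) + nbr br xs \<in> I"
    if "length xs = n \<and> i < j \<and> j < n" for xs i j
    using nbr_swap_cong[of xs i j] that by (simp add: cong_def)
  show "nbr br (xs @ [nbr br ys]) - (\<Sum>i<n. nbr br (ys[i := nbr br (xs @ [ys ! i])])) \<in> I"
    if "length xs = n - 1 \<and> length ys = n" for xs ys
    using nbr_fundamental_identity_cong[of xs ys] n that by (simp add: cong_def)
  show "nbr br (mult y z # xs) - (mult y (nbr br (z # xs)) + mult z (nbr br (y # xs))) \<in> I"
    if "length xs = n - 1" for y z xs
  proof -
    from that n have "xs \<noteq> []" by auto
    then show ?thesis by (simp add: nbr_mult_Cons zero)
  qed
qed

end

end

theorem proposition4p3:
  fixes s1 :: "'k::field \<Rightarrow> 'a::ab_group_add \<Rightarrow> 'a"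
    and s2 :: "'k \<Rightarrow> 'b::ab_group_add \<Rightarrow> 'b"
    and s :: "'k \<Rightarrow> 't::ab_group_add \<Rightarrow> 't"
    and mult1 br1 :: "'a \<Rightarrow> 'a \<Rightarrow> 'a"
    and mult2 br2 :: "'b \<Rightarrow> 'b \<Rightarrow> 'b"
    and tp :: "'a \<Rightarrow> 'b \<Rightarrow> 't"
    and mult br :: "'t \<Rightarrow> 't \<Rightarrow> 't"
    and n :: nat
  assumes P1: "poisson_algebra s1 mult1 br1"
    and P2: "poisson_algebra s2 mult2 br2"
    and tensor: "is_tensor_product s1 s2 s tp"
    and mult_bil: "bilinear_map s s s mult"
    and br_bil: "bilinear_map s s s br"
    and mult_tp: "\<And>x1 y1 x2 y2. mult (tp x1 y1) (tp x2 y2) = tp (mult1 x1 x2) (mult2 y1 y2)"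
    and br_tp: "\<And>x1 y1 x2 y2. br (tp x1 y1) (tp x2 y2) =
                  tp (br1 x1 x2) (mult2 y1 y2) + tp (mult1 x1 x2) (br2 y1 y2)"
    and n: "n \<ge> 2"
  shows "quotient_is_poisson_nlie s mult (nbr br) n
           (generated_poisson_ideal s mult br (swap_generators n br))"
proof -
  interpret T: poisson_tensor_product s1 mult1 br1 s2 mult2 br2 s tp mult br
    by unfold_locales (fact P1 P2 tensor mult_bil br_bil mult_tp br_tp)+
  interpret poisson s mult br
    by (rule poisson.intro) (rule T.tensor_poisson_algebra)
  let ?I = "generated_poisson_ideal s mult br (swap_generators n br)"
  interpret poisson_quotient s mult br ?I
    by unfold_locales (rule generated_poisson_ideal(1))
  show ?thesis
    by (rule quotient_is_poisson_nlieI[OF generated_poisson_ideal(2) n])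
qed

end
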